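(* Let $R_i=(\mathcal{F}_i,\mathcal{V}_i,\mathcal{R}_i)$, $i=1,2$, be TRSs. (a) If $R_1,R_2$ are in $\mathcal{V}$-normal form, then $R_1\cong_{\mathbf{SE}}R_2$ if and only if their $\mathcal{V}$-templates are $\mathcal{F}$-globally isomorphic, i.e. $(\mathcal{F}_1,\mathcal{V}_1^S,\nu^{R_1}(\mathcal{R}_1))\cong_{\mathbf{GFE}}(\mathcal{F}_2,\mathcal{V}_2^S,\nu^{R_2}(\mathcal{R}_2))$. (b) If $R_1,R_2$ are in $\mathcal{F}$-normal form, then $R_1\cong_{\mathbf{SVE}}R_2$ if and only if their $\mathcal{F}$-templates are $\mathcal{V}$-globally isomorphic, i.e. $(\mathcal{F}_1^S,\mathcal{V}_1,\mu^{R_1}(\mathcal{R}_1))\cong_{\mathbf{GVE}}(\mathcal{F}_2^S,\mathcal{V}_2,\mu^{R_2}(\mathcal{R}_2))$.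
   Context: Terms and TRSs: $\mathcal{F}$ is a finite set of function symbols with arity map $\mathrm{ar}:\mathcal{F}\to\mathbb{N}_0$, $\mathcal{V}$ a finite set of variables disjoint from $\mathcal{F}$, and $T(\mathcal{F},\mathcal{V})$ the usual set of first-order terms over them. A term rewriting system (TRS) is a triple $R=(\mathcal{F},\mathcal{V},\mathcal{R})$ where $\mathcal{R}$ is a finite set of rules $\ell\to r$ with $\ell,r\in T(\mathcal{F},\mathcal{V})$, $\ell\notin\mathcal{V}$ and every variable of $r$ occurs in $\ell$; $\mathcal{F}$ and $\mathcal{V}$ contain all symbols occurring in the rules. Term isomorphisms: a term isomorphism $\phi:T(\mathcal{F},\mathcal{V})\to T(\mathcal{F}',\mathcal{V}')$ is a pair of bijections $\phi_{\mathcal{F}}:\mathcal{F}\to\mathcal{F}'$ with $\mathrm{ar}'(\phi_{\mathcal{F}}(f))=\mathrm{ar}(f)$ for all $f$, and $\phi_{\mathcal{V}}:\mathcal{V}\to\mathcal{V}'$, extended homomorphically to terms. We write $\phi|_{\mathcal{F}}=\phi_{\mathcal{F}}$, $\phi|_{\mathcal{V}}=\phi_{\mathcal{V}}$. It is $\mathcal{V}$-invariant if $\mathcal{V}=\mathcal{V}'$ and $\phi_{\mathcal{V}}=\mathrm{id}$, and $\mathcal{F}$-invariant if $\mathcal{F}=\mathcal{F}'$ (with equal arities) and $\phi_{\mathcal{F}}=\mathrm{id}$. Normal forms: two distinct rules $\ell\to r$, $\ell'\to r'$ of $\mathcal{R}$ are $\mathcal{V}$-equivalent (resp. $\mathcal{F}$-equivalent)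 if there is an $\mathcal{F}$-invariant (resp. a $\mathcal{V}$-invariant) term isomorphism $\phi:T(\mathcal{F},\mathcal{V})\to T(\mathcal{F},\mathcal{V})$ with $\phi(\ell)=\ell'$ and $\phi(r)=r'$. $R$ is in $\mathcal{V}$-normal form (resp. $\mathcal{F}$-normal form) if $\mathcal{R}$ contains no pair of $\mathcal{V}$-equivalent (resp. $\mathcal{F}$-equivalent) rules. TRS isomorphisms (for $R=(\mathcal{F},\mathcal{V},\mathcal{R})$, $\mathcal{R}=\{\ell_1\to r_1,\dots,\ell_n\to r_n\}$, $R'=(\mathcal{F}',\mathcal{V}',\mathcal{R}')$, $\phi(\mathcal{R})=\{\phi(\ell)\to\phi(r):\ell\to r\in\mathcal{R}\}$): $R\cong_{\mathbf{GVE}}R'$ (resp. $R\cong_{\mathbf{GFE}}R'$) if there is an $\mathcal{F}$-invariant (resp. $\mathcal{V}$-invariant) term isomorphism $\phi:T(\mathcal{F},\mathcal{V})\to T(\mathcal{F}',\mathcal{V}')$ with $\phi(\mathcal{R})=\mathcal{R}'$. A local isomorphism is a family $(\phi_1,\dots,\phi_n)$ of term isomorphisms $T(\mathcal{F},\mathcal{V})\to T(\mathcal{F}',\mathcal{V}')$ with $\{\phi_i(\ell_i)\to\phi_i(r_i):1\le i\le n\}=\mathcal{R}'$. $R\cong_{\mathbf{SVE}}R'$ if both are in $\mathcal{F}$-normal form and there is a local isomorphism with $\phi_1|_{\mathcal{V}}=\dots=\phi_n|_{\mathcal{V}}$; $R\cong_{\mathbf{SE}}R'$ if both are in $\mathcal{V}$-normal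 form and there is a local isomorphism with $\phi_1|_{\mathcal{F}}=\dots=\phi_n|_{\mathcal{F}}$. Templates: let $\mathcal{R}=\{\ell_1\to r_1,\dots,\ell_n\to r_n\}$. The standardised variable set is $\mathcal{V}^S=\{x_1,\dots,x_K\}$ with $K=|\mathcal{V}|$; the standardised function symbol set is $\mathcal{F}^S=\{f_{k,l}: l\in L,1\le k\le p_l\}$, where $L=\{\mathrm{ar}(f):f\in\mathcal{F}\}$, $p_l=|\{f\in\mathcal{F}:\mathrm{ar}(f)=l\}|$ and $\mathrm{ar}(f_{k,l})=l$. For each $j$, $\nu_j:T(\mathcal{F},\mathcal{V})\to T(\mathcal{F},\mathcal{V}^S)$ is the $\mathcal{F}$-invariant term isomorphism sending the $k$-th distinct variable of $\ell_j$ (ordered by first occurrence, reading $\ell_j$ left to right) to $x_k$, and the remaining variables of $\mathcal{V}$ bijectively (in a fixed order) to the remaining $x_k$. $\mu_j:T(\mathcal{F},\mathcal{V})\to T(\mathcal{F}^S,\mathcal{V})$ is the $\mathcal{V}$-invariant term isomorphism sending, for each arity $l$, the $k$-th distinct function symbol of arity $l$ occurring in the string $\ell_j r_j$ (ordered by first occurrence, left to right) to $f_{k,l}$, and the remaining symbols of each arity $l$ bijectively (in a fixed order) to the remaining $f_{k,l}$. The template sets are $\nu(\mathcal{R})=\{\nu_j(\ell_j)\to\nu_j(r_j):1\le j\le n\}$ and $\mu(\mathcal{R})=\{\mu_j(\ell_j)\to\mu_j(r_j):1\le j\le n\}$. Superscripts $\nu^{R_i},\mathcal{V}_i^S$, etc.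 indicate the TRS these are computed for. *)

theory Defs
  imports Main
begin

datatype ('f, 'v) trm = Var 'v | Fun 'f "('f, 'v) trm list"

type_synonym ('f, 'v) rule = "('f, 'v) trm \<times> ('f, 'v) trm"

fun vars_list :: "('f, 'v) trm \<Rightarrow> 'v list" where
  "vars_list (Var x) = [x]"
| "vars_list (Fun f ts) = concat (map vars_list ts)"

fun funs_list :: "('f, 'v) trm \<Rightarrow> 'f list" where
  "funs_list (Var x) = []"
| "funs_list (Fun f ts) = f # concat (map funs_list ts)"

definition vars_trm :: "('f, 'v) trm \<Rightarrow> 'v set" where
  "vars_trm t = set (vars_list t)"

fun wf_trm :: "'f set \<Rightarrow> ('f \<Rightarrow> nat) \<Rightarrow> 'v set \<Rightarrow> ('f, 'v) trm \<Rightarrow> bool" where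
  "wf_trm F ar V (Var x) = (x \<in> V)"
| "wf_trm F ar V (Fun f ts) = (f \<in> F \<and> length ts = ar f \<and> (\<forall>t \<in> set ts. wf_trm F ar V t))"

definition map_rule :: "('f \<Rightarrow> 'g) \<Rightarrow> ('v \<Rightarrow> 'w) \<Rightarrow> ('f, 'v) rule \<Rightarrow> ('g, 'w) rule" where
  "map_rule g h \<rho> = (map_trm g h (fst \<rho>), map_trm g h (snd \<rho>))"

record ('f, 'v) trs =
  funs :: "'f set"
  arity :: "'f \<Rightarrow> nat"
  vars :: "'v set"
  rules :: "('f, 'v) rule set"

definition is_trs :: "('f, 'v) trs \<Rightarrow> bool" where
  "is_trs R \<longleftrightarrow> finite (funs R) \<and> finite (vars R) \<and> finite (rules R) \<and>
     (\<forall>(l, r) \<in> rules R. (\<exists>f ts. l = Fun f ts) \<and> vars_trm r \<subseteq> vars_trm l \<and>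
        wf_trm (funs R) (arity R) (vars R) l \<and> wf_trm (funs R) (arity R) (vars R) r)"

text \<open>(g, h) are the components of a term isomorphism T(F,V) \<rightarrow> T(F',V').\<close>
definition term_iso ::
  "'f set \<Rightarrow> ('f \<Rightarrow> nat) \<Rightarrow> 'v set \<Rightarrow> 'g set \<Rightarrow> ('g \<Rightarrow> nat) \<Rightarrow> 'w set \<Rightarrow>
   ('f \<Rightarrow> 'g) \<Rightarrow> ('v \<Rightarrow> 'w) \<Rightarrow> bool" where
  "term_iso F ar V F' ar' V' g h \<longleftrightarrow>
     bij_betw g F F' \<and> (\<forall>f \<in> F. ar' (g f) = ar f) \<and> bij_betw h V V'"

definition V_equiv :: "('f, 'v) trs \<Rightarrow> ('f, 'v) rule \<Rightarrow> ('f, 'v) rule \<Rightarrow> bool" where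
  "V_equiv R \<rho> \<rho>' \<longleftrightarrow>
     (\<exists>h. term_iso (funs R) (arity R) (vars R) (funs R) (arity R) (vars R) id h \<and>
          map_rule id h \<rho> = \<rho>')"

definition F_equiv :: "('f, 'v) trs \<Rightarrow> ('f, 'v) rule \<Rightarrow> ('f, 'v) rule \<Rightarrow> bool" where
  "F_equiv R \<rho> \<rho>' \<longleftrightarrow>
     (\<exists>g. term_iso (funs R) (arity R) (vars R) (funs R) (arity R) (vars R) g id \<and>
          map_rule g id \<rho> = \<rho>')"

definition V_normal :: "('f, 'v) trs \<Rightarrow> bool" where
  "V_normal R \<longleftrightarrow> (\<forall>\<rho> \<in> rules R. \<forall>\<rho>' \<in> rules R. \<rho> \<noteq> \<rho>' \<longrightarrow> \<not> V_equiv R \<rho> \<rho>')"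

definition F_normal :: "('f, 'v) trs \<Rightarrow> bool" where
  "F_normal R \<longleftrightarrow> (\<forall>\<rho> \<in> rules R. \<forall>\<rho>' \<in> rules R. \<rho> \<noteq> \<rho>' \<longrightarrow> \<not> F_equiv R \<rho> \<rho>')"

definition GVE_iso :: "('f, 'v) trs \<Rightarrow> ('f, 'w) trs \<Rightarrow> bool" where
  "GVE_iso R R' \<longleftrightarrow> funs R = funs R' \<and> (\<forall>f \<in> funs R. arity R' f = arity R f) \<and>
     (\<exists>h. term_iso (funs R) (arity R) (vars R) (funs R') (arity R') (vars R') id h \<and>
          map_rule id h ` rules R = rules R')"

definition GFE_iso :: "('f, 'v) trs \<Rightarrow> ('g, 'v) trs \<Rightarrow> bool" where
  "GFE_iso R R' \<longleftrightarrow> vars R = vars R' \<and>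
     (\<exists>g. term_iso (funs R) (arity R) (vars R) (funs R') (arity R') (vars R') g id \<and>
          map_rule g id ` rules R = rules R')"

definition local_iso :: "('f, 'v) trs \<Rightarrow> ('g, 'w) trs \<Rightarrow>
    (('f, 'v) rule \<Rightarrow> 'f \<Rightarrow> 'g) \<Rightarrow> (('f, 'v) rule \<Rightarrow> 'v \<Rightarrow> 'w) \<Rightarrow> bool" where
  "local_iso R R' G H \<longleftrightarrow>
     (\<forall>\<rho> \<in> rules R. term_iso (funs R) (arity R) (vars R) (funs R') (arity R') (vars R') (G \<rho>) (H \<rho>)) \<and>
     (\<lambda>\<rho>. map_rule (G \<rho>) (H \<rho>) \<rho>) ` rules R = rules R'"

definition SVE_iso :: "('f, 'v) trs \<Rightarrow> ('g, 'w) trs \<Rightarrow> bool" where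
  "SVE_iso R R' \<longleftrightarrow> F_normal R \<and> F_normal R' \<and>
     (\<exists>G h. local_iso R R' G (\<lambda>_. h))"

definition SE_iso :: "('f, 'v) trs \<Rightarrow> ('g, 'w) trs \<Rightarrow> bool" where
  "SE_iso R R' \<longleftrightarrow> V_normal R \<and> V_normal R' \<and>
     (\<exists>g H. local_iso R R' (\<lambda>_. g) H)"

text \<open>Position of an element in a list (0-based); only used for elements of the list.\<close>
fun pos :: "'a list \<Rightarrow> 'a \<Rightarrow> nat" where
  "pos [] x = 0"
| "pos (y # ys) x = (if x = y then 0 else Suc (pos ys x))"

text \<open>Standardised variables x_1,...,x_K are represented by the naturals 1,...,K.\<close>
definition nu_var :: "('f, 'v) trm \<Rightarrow> 'v \<Rightarrow> nat" where
  "nu_var l v = Suc (pos (remdups (vars_list l)) v)"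

definition nu_rule :: "('f, 'v) rule \<Rightarrow> ('f, nat) rule" where
  "nu_rule \<rho> = map_rule id (nu_var (fst \<rho>)) \<rho>"

definition nu_template :: "('f, 'v) trs \<Rightarrow> ('f, nat) trs" where
  "nu_template R = \<lparr> funs = funs R, arity = arity R, vars = {1 .. card (vars R)},
      rules = nu_rule ` rules R \<rparr>"

text \<open>Standardised function symbols f_{k,l} are represented by the pairs (k, l), with arity l.\<close>
definition std_funs :: "'f set \<Rightarrow> ('f \<Rightarrow> nat) \<Rightarrow> (nat \<times> nat) set" where
  "std_funs F ar = {(k, l). l \<in> ar ` F \<and> 1 \<le> k \<and> k \<le> card {f \<in> F. ar f = l}}"

definition mu_fun :: "('f \<Rightarrow> nat) \<Rightarrow> ('f, 'v) rule \<Rightarrow> 'f \<Rightarrow> nat \<times> nat" where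
  "mu_fun ar \<rho> f =
     (Suc (pos (filter (\<lambda>g. ar g = ar f) (remdups (funs_list (fst \<rho>) @ funs_list (snd \<rho>)))) f), ar f)"

definition mu_rule :: "('f \<Rightarrow> nat) \<Rightarrow> ('f, 'v) rule \<Rightarrow> (nat \<times> nat, 'v) rule" where
  "mu_rule ar \<rho> = map_rule (mu_fun ar \<rho>) id \<rho>"

definition mu_template :: "('f, 'v) trs \<Rightarrow> (nat \<times> nat, 'v) trs" where
  "mu_template R = \<lparr> funs = std_funs (funs R) (arity R), arity = snd, vars = vars R,
      rules = mu_rule (arity R) ` rules R \<rparr>"

end

theory Submission
  imports Defs
begin

(* A rule is determined by its nu-template up to renaming of its variables: for a fixed symbol
   map g, a bijection between variable sets of equal size sends l -> r to l' -> r' iff g sends the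
   template of l -> r to that of l' -> r'. Indeed the template numbers the variables of l by first
   occurrence, matching numbers gives the renaming on the variables of l, and it extends to a
   bijection of all variables. In V-normal form distinct rules have distinct templates, so a family
   of per-rule renamings matching the rules of R1 one-to-one with those of R2 exists iff g maps
   the template set of R1 onto that of R2. Part (b) is dual: function symbols are numbered by first
   occurrence within each arity, and the arity-preserving bijections needed to extend the matching
   exist iff both signatures have the same number of symbols of each arity, i.e. iff the
   standardised signatures coincide. *)

section \<open>Bijections between finite sets\<close>

lemma ex_bij_betw_factor:
  assumes "inj_on k A" "inj_on k' A'" "k ` A = k' ` A'"
  shows "\<exists>\<phi>. bij_betw \<phi> A A' \<and> (\<forall>a\<in>A. k' (\<phi> a) = k a)"
proof (intro exI conjI)
  have "bij_betw k A (k' ` A')" and "bij_betw (inv_into A' k') (k' ` A') A'"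
    using assms by (auto simp: bij_betw_def inj_on_inv_into)
  then show "bij_betw (inv_into A' k' \<circ> k) A A'"
    by (rule bij_betw_trans)
  show "\<forall>a\<in>A. k' ((inv_into A' k' \<circ> k) a) = k a"
    using assms(3) by (metis comp_apply f_inv_into_f imageI)
qed

lemma ex_bij_betw_extension:
  assumes "finite V" "finite V'" "card V = card V'" "A \<subseteq> V" "A' \<subseteq> V'" "bij_betw h A A'"
  shows "\<exists>H. bij_betw H V V' \<and> (\<forall>a\<in>A. H a = h a)"
proof -
  have "card (V - A) = card (V' - A')"
    using assms bij_betw_same_card[OF assms(6)] by (simp add: card_Diff_subset finite_subset)
  then obtain k where "bij_betw k (V - A) (V' - A')"
    using assms(1,2) finite_same_card_bij by blast
  then have "bij_betw (\<lambda>v. if v \<in> A then h v else k v) (A \<union> (V - A)) (A' \<union> (V' - A'))"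
    using assms(6) by (intro bij_betw_disjoint_Un) auto
  moreover have "A \<union> (V - A) = V" "A' \<union> (V' - A') = V'"
    using assms(4,5) by auto
  ultimately show ?thesis
    by auto
qed

lemma bij_betw_fibre:
  assumes "bij_betw h A A'" "\<forall>a\<in>A. c' (h a) = c a"
  shows "bij_betw h {a\<in>A. c a = l} {a\<in>A'. c' a = l}"
proof (rule bij_betw_subset[OF assms(1)])
  show "h ` {a\<in>A. c a = l} = {a\<in>A'. c' a = l}"
    using assms unfolding bij_betw_def by force
qed auto

lemma bij_betw_glue_fibres:
  assumes "\<And>l. bij_betw (H l) {v\<in>V. c v = l} {v\<in>V'. c' v = l}"
  shows "bij_betw (\<lambda>v. H (c v) v) V V'"
proof (rule bij_betw_imageI)
  have colour: "H (c v) v \<in> V' \<and> c' (H (c v) v) = c v" if "v \<in> V" for v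
    using bij_betw_apply[OF assms[of "c v"]] that by simp
  show "inj_on (\<lambda>v. H (c v) v) V"
  proof (rule inj_onI)
    fix x y assume x: "x \<in> V" and y: "y \<in> V" and eq: "H (c x) x = H (c y) y"
    have "c x = c y"
      using colour[OF x] colour[OF y] eq by simp
    moreover have "inj_on (H (c x)) {v\<in>V. c v = c x}"
      using assms bij_betw_imp_inj_on by blast
    ultimately show "x = y"
      using x y eq by (auto dest: inj_onD)
  qed
  have "w \<in> (\<lambda>v. H (c v) v) ` V" if "w \<in> V'" for w
  proof -
    have "w \<in> H (c' w) ` {v\<in>V. c v = c' w}"
      using that assms[of "c' w"] by (simp add: bij_betw_def)
    then obtain v where "v \<in> V" "c v = c' w" "w = H (c' w) v"
      by blast
    then show ?thesis
      by (intro rev_image_eqI[of v]) simp_all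
  qed
  then show "(\<lambda>v. H (c v) v) ` V = V'"
    using colour by blast
qed

lemma ex_bij_betw_extension_coloured:
  assumes "finite V" "finite V'" "\<And>l. card {v\<in>V. c v = l} = card {v\<in>V'. c' v = l}"
    and "A \<subseteq> V" "A' \<subseteq> V'" "bij_betw h A A'" "\<forall>a\<in>A. c' (h a) = c a"
  shows "\<exists>H. bij_betw H V V' \<and> (\<forall>v\<in>V. c' (H v) = c v) \<and> (\<forall>a\<in>A. H a = h a)"
proof -
  have "\<exists>H. bij_betw H {v\<in>V. c v = l} {v\<in>V'. c' v = l} \<and> (\<forall>a\<in>{a\<in>A. c a = l}. H a = h a)" for l
    by (rule ex_bij_betw_extension[OF _ _ assms(3) _ _ bij_betw_fibre[OF assms(6,7)]])
      (use assms(1,2,4,5) in auto)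
  then obtain H where H: "\<And>l. bij_betw (H l) {v\<in>V. c v = l} {v\<in>V'. c' v = l}"
    and agree: "\<And>l. \<forall>a\<in>{a\<in>A. c a = l}. H l a = h a"
    using choice[of "\<lambda>l H. bij_betw H {v\<in>V. c v = l} {v\<in>V'. c' v = l} \<and> (\<forall>a\<in>{a\<in>A. c a = l}. H a = h a)"]
    by blast
  show ?thesis
  proof (intro exI conjI)
    show "bij_betw (\<lambda>v. H (c v) v) V V'"
      using H by (rule bij_betw_glue_fibres)
    show "\<forall>v\<in>V. c' (H (c v) v) = c v"
      using bij_betw_apply[OF H] by simp
    show "\<forall>a\<in>A. H (c a) a = h a"
      using agree by simp
  qed
qed

lemma set_funs_list [simp]: "set (funs_list t) = set1_trm t"
  by (induction t) auto

lemma set_vars_list [simp]: "set (vars_list t) = set2_trm t"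
  by (induction t) auto

lemma vars_trm_eq_set2_trm: "vars_trm t = set2_trm t"
  by (simp add: vars_trm_def)

lemma wf_trm_imp_subset:
  "wf_trm F ar V t \<Longrightarrow> set1_trm t \<subseteq> F \<and> set2_trm t \<subseteq> V"
  by (induction t) auto

lemma is_trs_rule:
  assumes "is_trs R" "(l, r) \<in> rules R"
  shows "set2_trm r \<subseteq> set2_trm l" "set2_trm l \<subseteq> vars R"
    and "set1_trm l \<union> set1_trm r \<subseteq> funs R"
  using assms wf_trm_imp_subset unfolding is_trs_def vars_trm_eq_set2_trm by fast+

lemma vars_list_map_trm [simp]: "vars_list (map_trm g h t) = map h (vars_list t)"
  by (induction t) (simp_all add: map_concat comp_def cong: map_cong)

lemma funs_list_map_trm [simp]: "funs_list (map_trm g h t) = map g (funs_list t)"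
  by (induction t) (simp_all add: map_concat comp_def cong: map_cong)

lemma map_rule_pair: "map_rule g h (l, r) = (map_trm g h l, map_trm g h r)"
  by (simp add: map_rule_def)

lemma map_rule_id: "map_rule id id \<rho> = \<rho>"
  by (simp add: map_rule_def trm.map_id)

lemma map_trm_eq_if_factors:
  assumes eq: "map_trm g k t = map_trm g' k' t'"
    and inj: "inj_on g' A" "inj_on k' B" and t': "set1_trm t' \<subseteq> A" "set2_trm t' \<subseteq> B"
    and G: "\<forall>f\<in>set1_trm t. G f \<in> A \<and> g' (G f) = g f"
    and H: "\<forall>v\<in>set2_trm t. H v \<in> B \<and> k' (H v) = k v"
  shows "map_trm G H t = t'"
proof (rule trm.inj_map_strong)
  have "map_trm g' k' (map_trm G H t) = map_trm g k t"
    unfolding trm.map_comp using G H by (auto intro: trm.map_cong0)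
  then show "map_trm g' k' (map_trm G H t) = map_trm g' k' t'"
    using eq by simp
qed (use inj t' G H in \<open>auto simp: trm.set_map inj_on_def\<close>)

section \<open>Templates of single rules\<close>

lemma nth_pos: "x \<in> set ys \<Longrightarrow> ys ! pos ys x = x"
  by (induction ys) auto

lemma inj_on_pos: "inj_on (pos ys) (set ys)"
  by (metis inj_onI nth_pos)

lemma pos_map:
  "inj_on f (set ys) \<Longrightarrow> x \<in> set ys \<Longrightarrow> pos (map f ys) (f x) = pos ys x"
  by (induction ys) (auto simp: inj_on_def)

lemma remdups_map_inj_on:
  "inj_on f (set xs) \<Longrightarrow> remdups (map f xs) = map f (remdups xs)"
  by (metis remdups_map_remdups distinct_map distinct_remdups distinct_remdups_id set_remdups)

lemma inj_on_nu_var: "inj_on (nu_var l) (set2_trm l)"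
  using inj_on_pos[of "remdups (vars_list l)"] by (simp add: nu_var_def inj_on_def)

lemma nu_var_map_trm:
  assumes "inj_on H (set2_trm l)" "v \<in> set2_trm l"
  shows "nu_var (map_trm g H l) (H v) = nu_var l v"
  using assms pos_map[of H "remdups (vars_list l)" v]
  by (simp add: nu_var_def remdups_map_inj_on)

lemma nu_rule_map_rule:
  assumes "inj_on H (set2_trm l)" "set2_trm r \<subseteq> set2_trm l"
  shows "nu_rule (map_rule g H (l, r)) = map_rule g id (nu_rule (l, r))"
proof -
  have "map_trm g (nu_var (map_trm g H l) \<circ> H) t = map_trm g (nu_var l) t"
    if "set2_trm t \<subseteq> set2_trm l" for t
    using that nu_var_map_trm[OF assms(1)] by (intro trm.map_cong0) auto
  then show ?thesis
    using assms(2) by (simp add: nu_rule_def map_rule_def trm.map_comp)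
qed

lemma ex_var_renaming_if_nu_rule_eq:
  assumes lr: "set2_trm l \<subseteq> V" "set2_trm r \<subseteq> set2_trm l"
    and lr': "set2_trm l' \<subseteq> V'" "set2_trm r' \<subseteq> set2_trm l'"
    and V: "finite V" "finite V'" "card V = card V'"
    and eq: "map_rule g id (nu_rule (l, r)) = nu_rule (l', r')"
  shows "\<exists>H. bij_betw H V V' \<and> map_rule g H (l, r) = (l', r')"
proof -
  let ?k = "nu_var l" and ?k' = "nu_var l'"
  have eq_l: "map_trm g ?k l = map_trm id ?k' l'" and eq_r: "map_trm g ?k r = map_trm id ?k' r'"
    using eq by (simp_all add: nu_rule_def map_rule_def trm.map_comp)
  have "?k ` set2_trm l = ?k' ` set2_trm l'"
    using arg_cong[OF eq_l, of set2_trm] by (simp add: trm.set_map)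
  then obtain H0 where H0: "bij_betw H0 (set2_trm l) (set2_trm l')"
    and k_H0: "\<forall>v\<in>set2_trm l. ?k' (H0 v) = ?k v"
    using ex_bij_betw_factor[OF inj_on_nu_var inj_on_nu_var] by blast
  obtain H where H: "bij_betw H V V'" and "\<forall>v\<in>set2_trm l. H v = H0 v"
    using ex_bij_betw_extension[OF V lr(1) lr'(1) H0] by blast
  with H0 k_H0 have k_H: "\<forall>v\<in>set2_trm l. H v \<in> set2_trm l' \<and> ?k' (H v) = ?k v"
    by (simp add: bij_betw_apply)
  have "map_trm g H t = t'"
    if "set2_trm t \<subseteq> set2_trm l" "set2_trm t' \<subseteq> set2_trm l'" "map_trm g ?k t = map_trm id ?k' t'"
    for t t'
    by (rule map_trm_eq_if_factors[where A = UNIV and B = "set2_trm l'"])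
      (use that k_H inj_on_nu_var in auto)
  then show ?thesis
    using H eq_l eq_r lr lr' by (auto simp: map_rule_pair)
qed

lemma inj_on_nu_rule_if_V_normal:
  assumes "is_trs R" "V_normal R"
  shows "inj_on nu_rule (rules R)"
proof (rule inj_onI)
  fix \<rho> \<rho>' assume \<rho>: "\<rho> \<in> rules R" and \<rho>': "\<rho>' \<in> rules R" and eq: "nu_rule \<rho> = nu_rule \<rho>'"
  obtain l r l' r' where lr: "\<rho> = (l, r)" "\<rho>' = (l', r')"
    by fastforce
  have "finite (vars R)"
    using assms(1) by (simp add: is_trs_def)
  then obtain H where "bij_betw H (vars R) (vars R)" "map_rule id H \<rho> = \<rho>'"
    using ex_var_renaming_if_nu_rule_eq[of l "vars R" r l' "vars R" r' id]
      is_trs_rule[OF assms(1)] \<rho> \<rho>' eq map_rule_id unfolding lr by metis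
  then have "V_equiv R \<rho> \<rho>'"
    by (auto simp: V_equiv_def term_iso_def)
  then show "\<rho> = \<rho>'"
    using assms(2) \<rho> \<rho>' by (auto simp: V_normal_def)
qed

definition arity_count :: "'f set \<Rightarrow> ('f \<Rightarrow> nat) \<Rightarrow> nat \<Rightarrow> nat" where
  "arity_count F ar l = card {f\<in>F. ar f = l}"

lemma arity_count_eq_if_bij_betw:
  assumes "bij_betw g F F'" "\<forall>f\<in>F. ar' (g f) = ar f"
  shows "arity_count F ar = arity_count F' ar'"
  using bij_betw_same_card[OF bij_betw_fibre[OF assms]] by (simp add: arity_count_def fun_eq_iff)

lemma snd_mu_fun [simp]: "snd (mu_fun ar \<rho> f) = ar f"
  by (simp add: mu_fun_def)

lemma inj_on_mu_fun: "inj_on (mu_fun ar (l, r)) (set1_trm l \<union> set1_trm r)"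
proof (rule inj_onI)
  fix f f' assume f: "f \<in> set1_trm l \<union> set1_trm r" and f': "f' \<in> set1_trm l \<union> set1_trm r"
    and eq: "mu_fun ar (l, r) f = mu_fun ar (l, r) f'"
  then have "ar f = ar f'"
    by (metis snd_mu_fun)
  with f f' eq show "f = f'"
    using inj_on_pos[of "filter (\<lambda>g. ar g = ar f) (remdups (funs_list l @ funs_list r))"]
    by (simp add: mu_fun_def inj_on_def)
qed

lemma mu_fun_map_rule:
  assumes inj: "inj_on G (set1_trm l \<union> set1_trm r)"
    and ar: "\<forall>f\<in>set1_trm l \<union> set1_trm r. ar' (G f) = ar f"
    and f: "f \<in> set1_trm l \<union> set1_trm r"
  shows "mu_fun ar' (map_rule G h (l, r)) (G f) = mu_fun ar (l, r) f"
proof -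
  let ?xs = "remdups (funs_list l @ funs_list r)"
  have "remdups (funs_list (map_trm G h l) @ funs_list (map_trm G h r)) = map G ?xs"
    using inj by (simp add: remdups_map_inj_on flip: map_append)
  moreover have "filter (\<lambda>g. ar' (G g) = ar' (G f)) ?xs = filter (\<lambda>g. ar g = ar f) ?xs"
    using ar f by (intro filter_cong) auto
  then have "filter (\<lambda>g. ar' g = ar' (G f)) (map G ?xs) = map G (filter (\<lambda>g. ar g = ar f) ?xs)"
    by (simp add: filter_map comp_def)
  moreover have "inj_on G (set (filter (\<lambda>g. ar g = ar f) ?xs))"
    using inj by (auto intro: inj_on_subset)
  ultimately show ?thesis
    using pos_map[of G "filter (\<lambda>g. ar g = ar f) ?xs" f] ar f
    by (simp add: mu_fun_def map_rule_def)
qed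

lemma mu_rule_map_rule:
  assumes "inj_on G (set1_trm l \<union> set1_trm r)" "\<forall>f\<in>set1_trm l \<union> set1_trm r. ar' (G f) = ar f"
  shows "mu_rule ar' (map_rule G h (l, r)) = map_rule id h (mu_rule ar (l, r))"
proof -
  have "map_trm (mu_fun ar' (map_rule G h (l, r)) \<circ> G) h t = map_trm (mu_fun ar (l, r)) h t"
    if "set1_trm t \<subseteq> set1_trm l \<union> set1_trm r" for t
    using that mu_fun_map_rule[OF assms] by (intro trm.map_cong0) auto
  then show ?thesis
    by (simp add: mu_rule_def map_rule_def trm.map_comp)
qed

lemma ex_fun_renaming_if_mu_rule_eq:
  assumes lr: "set1_trm l \<union> set1_trm r \<subseteq> F" and lr': "set1_trm l' \<union> set1_trm r' \<subseteq> F'"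
    and F: "finite F" "finite F'" "arity_count F ar = arity_count F' ar'"
    and eq: "map_rule id h (mu_rule ar (l, r)) = mu_rule ar' (l', r')"
  shows "\<exists>G. bij_betw G F F' \<and> (\<forall>f\<in>F. ar' (G f) = ar f) \<and> map_rule G h (l, r) = (l', r')"
proof -
  let ?A = "set1_trm l \<union> set1_trm r" and ?A' = "set1_trm l' \<union> set1_trm r'"
  let ?k = "mu_fun ar (l, r)" and ?k' = "mu_fun ar' (l', r')"
  have eq_l: "map_trm ?k h l = map_trm ?k' id l'" and eq_r: "map_trm ?k h r = map_trm ?k' id r'"
    using eq by (simp_all add: mu_rule_def map_rule_def trm.map_comp)
  have "?k ` ?A = ?k' ` ?A'"
    using arg_cong[OF eq_l, of set1_trm] arg_cong[OF eq_r, of set1_trm]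
    by (simp add: trm.set_map image_Un)
  then obtain G0 where G0: "bij_betw G0 ?A ?A'" and k_G0: "\<forall>f\<in>?A. ?k' (G0 f) = ?k f"
    using ex_bij_betw_factor[OF inj_on_mu_fun[of ar l r] inj_on_mu_fun[of ar' l' r']] by blast
  have ar_G0: "\<forall>f\<in>?A. ar' (G0 f) = ar f"
  proof
    fix f assume "f \<in> ?A"
    then have "snd (?k' (G0 f)) = snd (?k f)"
      using k_G0 by simp
    then show "ar' (G0 f) = ar f"
      by simp
  qed
  have "card {f\<in>F. ar f = n} = card {f\<in>F'. ar' f = n}" for n
    using fun_cong[OF F(3)] by (simp add: arity_count_def)
  then obtain G where G: "bij_betw G F F'" "\<forall>f\<in>F. ar' (G f) = ar f" and "\<forall>f\<in>?A. G f = G0 f"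
    using ex_bij_betw_extension_coloured[OF F(1,2) _ lr lr' G0 ar_G0] by blast
  with k_G0 have k_G: "\<forall>f\<in>?A. G f \<in> ?A' \<and> ?k' (G f) = ?k f"
    using bij_betw_apply[OF G0] by auto
  have "map_trm G h t = t'"
    if "set1_trm t \<subseteq> ?A" "set1_trm t' \<subseteq> ?A'" "map_trm ?k h t = map_trm ?k' id t'" for t t'
    by (rule map_trm_eq_if_factors[where A = ?A' and B = UNIV])
      (use that k_G inj_on_mu_fun in auto)
  then show ?thesis
    using G eq_l eq_r by (auto simp: map_rule_pair)
qed

lemma inj_on_mu_rule_if_F_normal:
  assumes "is_trs R" "F_normal R"
  shows "inj_on (mu_rule (arity R)) (rules R)"
proof (rule inj_onI)
  fix \<rho> \<rho>' assume \<rho>: "\<rho> \<in> rules R" and \<rho>': "\<rho>' \<in> rules R"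
    and eq: "mu_rule (arity R) \<rho> = mu_rule (arity R) \<rho>'"
  obtain l r l' r' where lr: "\<rho> = (l, r)" "\<rho>' = (l', r')"
    by fastforce
  have "finite (funs R)"
    using assms(1) by (simp add: is_trs_def)
  then obtain G where "bij_betw G (funs R) (funs R)" "\<forall>f\<in>funs R. arity R (G f) = arity R f"
    and "map_rule G id \<rho> = \<rho>'"
    using ex_fun_renaming_if_mu_rule_eq[of l r "funs R" l' r' "funs R" "arity R" "arity R" id]
      is_trs_rule[OF assms(1)] \<rho> \<rho>' eq map_rule_id unfolding lr by metis
  then have "F_equiv R \<rho> \<rho>'"
    by (auto simp: F_equiv_def term_iso_def)
  then show "\<rho> = \<rho>'"
    using assms(2) \<rho> \<rho>' by (auto simp: F_normal_def)
qed

lemma std_funs_eq: "std_funs F ar = {(k, l). 1 \<le> k \<and> k \<le> arity_count F ar l}"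
proof -
  have "l \<in> ar ` F" if "1 \<le> k" "k \<le> card {f\<in>F. ar f = l}" for k l
    using that by (metis (mono_tags, lifting) Collect_empty_eq card.empty image_eqI le_zero_eq not_one_le_zero)
  then show ?thesis
    by (auto simp: std_funs_def arity_count_def)
qed

lemma std_funs_eq_iff: "std_funs F ar = std_funs F' ar' \<longleftrightarrow> arity_count F ar = arity_count F' ar'"
proof
  assume eq: "std_funs F ar = std_funs F' ar'"
  have "{1..arity_count F ar l} = {1..arity_count F' ar' l}" for l
    using eq unfolding std_funs_eq set_eq_iff by auto
  then show "arity_count F ar = arity_count F' ar'"
    by (metis card_atLeastAtMost diff_Suc_1 ext)
qed (simp add: std_funs_eq)

section \<open>Templates of rule sets\<close>

(* kappa and kappa' are canonical forms (the templates), tau is the action of the global component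
   on them and phi h that of a local component h; injectivity of kappa' is where normal form
   enters. *)
lemma ex_pointwise_image_eq_iff_canonical_image_eq:
  assumes canon_map: "\<And>\<rho> h. \<rho> \<in> A \<Longrightarrow> P h \<Longrightarrow> \<kappa>' (\<phi> h \<rho>) = \<tau> (\<kappa> \<rho>)"
    and map_canon: "\<And>\<rho> \<rho>'. \<rho> \<in> A \<Longrightarrow> \<rho>' \<in> B \<Longrightarrow> \<kappa>' \<rho>' = \<tau> (\<kappa> \<rho>) \<Longrightarrow> \<exists>h. P h \<and> \<phi> h \<rho> = \<rho>'"
    and inj: "inj_on \<kappa>' B"
  shows "(\<exists>H. (\<forall>\<rho>\<in>A. P (H \<rho>)) \<and> (\<lambda>\<rho>. \<phi> (H \<rho>) \<rho>) ` A = B) \<longleftrightarrow> \<tau> ` \<kappa> ` A = \<kappa>' ` B"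
proof
  assume "\<exists>H. (\<forall>\<rho>\<in>A. P (H \<rho>)) \<and> (\<lambda>\<rho>. \<phi> (H \<rho>) \<rho>) ` A = B"
  then obtain H where "\<forall>\<rho>\<in>A. P (H \<rho>)" "B = (\<lambda>\<rho>. \<phi> (H \<rho>) \<rho>) ` A"
    by blast
  then show "\<tau> ` \<kappa> ` A = \<kappa>' ` B"
    using canon_map by (simp add: image_image)
next
  assume img: "\<tau> ` \<kappa> ` A = \<kappa>' ` B"
  have "\<exists>h. P h \<and> \<phi> h \<rho> \<in> B" if "\<rho> \<in> A" for \<rho>
  proof -
    have "\<tau> (\<kappa> \<rho>) \<in> \<kappa>' ` B"
      using img that by blast
    then obtain \<rho>' where "\<rho>' \<in> B" "\<kappa>' \<rho>' = \<tau> (\<kappa> \<rho>)"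
      by auto
    then show ?thesis
      using map_canon \<open>\<rho> \<in> A\<close> by metis
  qed
  then obtain H where H: "\<forall>\<rho>\<in>A. P (H \<rho>) \<and> \<phi> (H \<rho>) \<rho> \<in> B"
    using bchoice[of A "\<lambda>\<rho> h. P h \<and> \<phi> h \<rho> \<in> B"] by blast
  have "\<rho>' \<in> (\<lambda>\<rho>. \<phi> (H \<rho>) \<rho>) ` A" if "\<rho>' \<in> B" for \<rho>'
  proof -
    have "\<kappa>' \<rho>' \<in> \<tau> ` \<kappa> ` A"
      using img that by blast
    then obtain \<rho> where \<rho>: "\<rho> \<in> A" "\<kappa>' \<rho>' = \<tau> (\<kappa> \<rho>)"
      by auto
    then have "\<kappa>' \<rho>' = \<kappa>' (\<phi> (H \<rho>) \<rho>)"
      using H canon_map by simp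
    then have "\<rho>' = \<phi> (H \<rho>) \<rho>"
      using inj H \<rho>(1) \<open>\<rho>' \<in> B\<close> by (simp add: inj_on_eq_iff)
    with \<rho>(1) show ?thesis
      by blast
  qed
  with H show "\<exists>H. (\<forall>\<rho>\<in>A. P (H \<rho>)) \<and> (\<lambda>\<rho>. \<phi> (H \<rho>) \<rho>) ` A = B"
    by blast
qed

lemma local_iso_const_funs_iff:
  assumes "rules R \<noteq> {} \<or> rules R' \<noteq> {}"
  shows "local_iso R R' (\<lambda>_. g) H \<longleftrightarrow>
    bij_betw g (funs R) (funs R') \<and> (\<forall>f\<in>funs R. arity R' (g f) = arity R f) \<and>
    (\<forall>\<rho>\<in>rules R. bij_betw (H \<rho>) (vars R) (vars R')) \<and>
    (\<lambda>\<rho>. map_rule g (H \<rho>) \<rho>) ` rules R = rules R'"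
  using assms by (auto simp: local_iso_def term_iso_def)

lemma local_iso_const_vars_iff:
  assumes "rules R \<noteq> {} \<or> rules R' \<noteq> {}"
  shows "local_iso R R' G (\<lambda>_. h) \<longleftrightarrow>
    bij_betw h (vars R) (vars R') \<and>
    (\<forall>\<rho>\<in>rules R. bij_betw (G \<rho>) (funs R) (funs R') \<and> (\<forall>f\<in>funs R. arity R' (G \<rho> f) = arity R f)) \<and>
    (\<lambda>\<rho>. map_rule (G \<rho>) h \<rho>) ` rules R = rules R'"
  using assms by (auto simp: local_iso_def term_iso_def)

lemma GFE_iso_nu_template_iff:
  "GFE_iso (nu_template R) (nu_template R') \<longleftrightarrow>
    card (vars R) = card (vars R') \<and>
    (\<exists>g. bij_betw g (funs R) (funs R') \<and> (\<forall>f\<in>funs R. arity R' (g f) = arity R f) \<and>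
         map_rule g id ` nu_rule ` rules R = nu_rule ` rules R')"
  by (auto simp: GFE_iso_def nu_template_def term_iso_def)

lemma GVE_iso_mu_template_iff:
  "GVE_iso (mu_template R) (mu_template R') \<longleftrightarrow>
    arity_count (funs R) (arity R) = arity_count (funs R') (arity R') \<and>
    (\<exists>h. bij_betw h (vars R) (vars R') \<and>
         map_rule id h ` mu_rule (arity R) ` rules R = mu_rule (arity R') ` rules R')"
  by (auto simp: GVE_iso_def mu_template_def term_iso_def bij_betw_id_iff std_funs_eq_iff)

lemma ex_var_renamings_iff_nu_images_eq:
  assumes T1: "is_trs R1" and T2: "is_trs R2" and N2: "V_normal R2"
    and card: "card (vars R1) = card (vars R2)"
  shows "(\<exists>H. (\<forall>\<rho>\<in>rules R1. bij_betw (H \<rho>) (vars R1) (vars R2)) \<and>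
            (\<lambda>\<rho>. map_rule g (H \<rho>) \<rho>) ` rules R1 = rules R2)
    \<longleftrightarrow> map_rule g id ` nu_rule ` rules R1 = nu_rule ` rules R2"
proof (rule ex_pointwise_image_eq_iff_canonical_image_eq)
  fix \<rho> H assume \<rho>: "\<rho> \<in> rules R1" and H: "bij_betw H (vars R1) (vars R2)"
  obtain l r where lr: "\<rho> = (l, r)"
    by fastforce
  have "inj_on H (set2_trm l)"
    using bij_betw_imp_inj_on[OF H] is_trs_rule(2)[OF T1 \<rho>[unfolded lr]] by (rule inj_on_subset)
  then show "nu_rule (map_rule g H \<rho>) = map_rule g id (nu_rule \<rho>)"
    unfolding lr using is_trs_rule(1)[OF T1 \<rho>[unfolded lr]] by (rule nu_rule_map_rule)
next
  fix \<rho> \<rho>' assume \<rho>: "\<rho> \<in> rules R1" and \<rho>': "\<rho>' \<in> rules R2"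
    and eq: "nu_rule \<rho>' = map_rule g id (nu_rule \<rho>)"
  obtain l r l' r' where lr: "\<rho> = (l, r)" "\<rho>' = (l', r')"
    by fastforce
  have "finite (vars R1)" "finite (vars R2)"
    using T1 T2 by (simp_all add: is_trs_def)
  then show "\<exists>H. bij_betw H (vars R1) (vars R2) \<and> map_rule g H \<rho> = \<rho>'"
    using ex_var_renaming_if_nu_rule_eq[of l "vars R1" r l' "vars R2" r' g]
      is_trs_rule[OF T1 \<rho>[unfolded lr(1)]] is_trs_rule[OF T2 \<rho>'[unfolded lr(2)]] eq card
    unfolding lr by simp
next
  show "inj_on nu_rule (rules R2)"
    using T2 N2 by (rule inj_on_nu_rule_if_V_normal)
qed

lemma ex_fun_renamings_iff_mu_images_eq:
  assumes T1: "is_trs R1" and T2: "is_trs R2" and N2: "F_normal R2"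
    and count: "arity_count (funs R1) (arity R1) = arity_count (funs R2) (arity R2)"
  shows "(\<exists>G. (\<forall>\<rho>\<in>rules R1. bij_betw (G \<rho>) (funs R1) (funs R2) \<and>
              (\<forall>f\<in>funs R1. arity R2 (G \<rho> f) = arity R1 f)) \<and>
            (\<lambda>\<rho>. map_rule (G \<rho>) h \<rho>) ` rules R1 = rules R2)
    \<longleftrightarrow> map_rule id h ` mu_rule (arity R1) ` rules R1 = mu_rule (arity R2) ` rules R2"
proof (rule ex_pointwise_image_eq_iff_canonical_image_eq)
  fix \<rho> G assume \<rho>: "\<rho> \<in> rules R1"
    and G: "bij_betw G (funs R1) (funs R2) \<and> (\<forall>f\<in>funs R1. arity R2 (G f) = arity R1 f)"
  obtain l r where lr: "\<rho> = (l, r)"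
    by fastforce
  have funs_lr: "set1_trm l \<union> set1_trm r \<subseteq> funs R1"
    using is_trs_rule(3)[OF T1 \<rho>[unfolded lr]] .
  then have "inj_on G (set1_trm l \<union> set1_trm r)"
    using G bij_betw_imp_inj_on inj_on_subset by blast
  moreover have "\<forall>f\<in>set1_trm l \<union> set1_trm r. arity R2 (G f) = arity R1 f"
    using G funs_lr by blast
  ultimately show "mu_rule (arity R2) (map_rule G h \<rho>) = map_rule id h (mu_rule (arity R1) \<rho>)"
    unfolding lr by (rule mu_rule_map_rule)
next
  fix \<rho> \<rho>' assume \<rho>: "\<rho> \<in> rules R1" and \<rho>': "\<rho>' \<in> rules R2"
    and eq: "mu_rule (arity R2) \<rho>' = map_rule id h (mu_rule (arity R1) \<rho>)"
  obtain l r l' r' where lr: "\<rho> = (l, r)" "\<rho>' = (l', r')"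
    by fastforce
  have "finite (funs R1)" "finite (funs R2)"
    using T1 T2 by (simp_all add: is_trs_def)
  then show "\<exists>G. (bij_betw G (funs R1) (funs R2) \<and> (\<forall>f\<in>funs R1. arity R2 (G f) = arity R1 f)) \<and>
      map_rule G h \<rho> = \<rho>'"
    using ex_fun_renaming_if_mu_rule_eq[of l r "funs R1" l' r' "funs R2" "arity R1" "arity R2" h]
      is_trs_rule[OF T1 \<rho>[unfolded lr(1)]] is_trs_rule[OF T2 \<rho>'[unfolded lr(2)]] eq count
    unfolding lr by simp
next
  show "inj_on (mu_rule (arity R2)) (rules R2)"
    using T2 N2 by (rule inj_on_mu_rule_if_F_normal)
qed

lemma SE_iso_iff_GFE_iso_nu_template:
  assumes T1: "is_trs R1" and T2: "is_trs R2" and ne: "rules R1 \<noteq> {} \<or> rules R2 \<noteq> {}"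
    and N1: "V_normal R1" and N2: "V_normal R2"
  shows "SE_iso R1 R2 \<longleftrightarrow> GFE_iso (nu_template R1) (nu_template R2)"
proof
  assume "SE_iso R1 R2"
  then obtain g H where g: "bij_betw g (funs R1) (funs R2)" "\<forall>f\<in>funs R1. arity R2 (g f) = arity R1 f"
    and H: "\<forall>\<rho>\<in>rules R1. bij_betw (H \<rho>) (vars R1) (vars R2)"
      "(\<lambda>\<rho>. map_rule g (H \<rho>) \<rho>) ` rules R1 = rules R2"
    unfolding SE_iso_def local_iso_const_funs_iff[OF ne] by blast
  have card: "card (vars R1) = card (vars R2)"
    using H ne bij_betw_same_card by blast
  have "map_rule g id ` nu_rule ` rules R1 = nu_rule ` rules R2"
    by (rule ex_var_renamings_iff_nu_images_eq[OF T1 T2 N2 card, THEN iffD1]) (use H in blast)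
  with card g show "GFE_iso (nu_template R1) (nu_template R2)"
    unfolding GFE_iso_nu_template_iff by blast
next
  assume "GFE_iso (nu_template R1) (nu_template R2)"
  then obtain g where card: "card (vars R1) = card (vars R2)"
    and g: "bij_betw g (funs R1) (funs R2)" "\<forall>f\<in>funs R1. arity R2 (g f) = arity R1 f"
    and images: "map_rule g id ` nu_rule ` rules R1 = nu_rule ` rules R2"
    unfolding GFE_iso_nu_template_iff by blast
  obtain H where "\<forall>\<rho>\<in>rules R1. bij_betw (H \<rho>) (vars R1) (vars R2)"
    "(\<lambda>\<rho>. map_rule g (H \<rho>) \<rho>) ` rules R1 = rules R2"
    using ex_var_renamings_iff_nu_images_eq[OF T1 T2 N2 card, THEN iffD2, OF images] by blast
  with g N1 N2 show "SE_iso R1 R2"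
    unfolding SE_iso_def local_iso_const_funs_iff[OF ne] by blast
qed

lemma SVE_iso_iff_GVE_iso_mu_template:
  assumes T1: "is_trs R1" and T2: "is_trs R2" and ne: "rules R1 \<noteq> {} \<or> rules R2 \<noteq> {}"
    and N1: "F_normal R1" and N2: "F_normal R2"
  shows "SVE_iso R1 R2 \<longleftrightarrow> GVE_iso (mu_template R1) (mu_template R2)"
proof
  assume "SVE_iso R1 R2"
  then obtain G h where h: "bij_betw h (vars R1) (vars R2)"
    and G: "\<forall>\<rho>\<in>rules R1. bij_betw (G \<rho>) (funs R1) (funs R2) \<and>
        (\<forall>f\<in>funs R1. arity R2 (G \<rho> f) = arity R1 f)"
      "(\<lambda>\<rho>. map_rule (G \<rho>) h \<rho>) ` rules R1 = rules R2"
    unfolding SVE_iso_def local_iso_const_vars_iff[OF ne] by blast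
  have count: "arity_count (funs R1) (arity R1) = arity_count (funs R2) (arity R2)"
    using G ne arity_count_eq_if_bij_betw by blast
  have "map_rule id h ` mu_rule (arity R1) ` rules R1 = mu_rule (arity R2) ` rules R2"
    by (rule ex_fun_renamings_iff_mu_images_eq[OF T1 T2 N2 count, THEN iffD1]) (use G in blast)
  with count h show "GVE_iso (mu_template R1) (mu_template R2)"
    unfolding GVE_iso_mu_template_iff by blast
next
  assume "GVE_iso (mu_template R1) (mu_template R2)"
  then obtain h where count: "arity_count (funs R1) (arity R1) = arity_count (funs R2) (arity R2)"
    and h: "bij_betw h (vars R1) (vars R2)"
    and images: "map_rule id h ` mu_rule (arity R1) ` rules R1 = mu_rule (arity R2) ` rules R2"
    unfolding GVE_iso_mu_template_iff by blast
  obtain G where "\<forall>\<rho>\<in>rules R1. bij_betw (G \<rho>) (funs R1) (funs R2) \<and>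
      (\<forall>f\<in>funs R1. arity R2 (G \<rho> f) = arity R1 f)"
    "(\<lambda>\<rho>. map_rule (G \<rho>) h \<rho>) ` rules R1 = rules R2"
    using ex_fun_renamings_iff_mu_images_eq[OF T1 T2 N2 count, THEN iffD2, OF images] by blast
  with h N1 N2 show "SVE_iso R1 R2"
    unfolding SVE_iso_def local_iso_const_vars_iff[OF ne] by blast
qed

theorem mainTheorem11:
  fixes R1 :: "('f1, 'v1) trs" and R2 :: "('f2, 'v2) trs"
  assumes "is_trs R1" and "is_trs R2"
    and "rules R1 \<noteq> {} \<or> rules R2 \<noteq> {}"
  shows "(V_normal R1 \<and> V_normal R2 \<longrightarrow>
            (SE_iso R1 R2 \<longleftrightarrow> GFE_iso (nu_template R1) (nu_template R2)))
       \<and> (F_normal R1 \<and> F_normal R2 \<longrightarrow>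
            (SVE_iso R1 R2 \<longleftrightarrow> GVE_iso (mu_template R1) (mu_template R2)))"
  using SE_iso_iff_GFE_iso_nu_template[OF assms] SVE_iso_iff_GVE_iso_mu_template[OF assms]
  by blast

end
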